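(* Let $p\in(0,1]$ and consider two independent doors, each initially closed, each opening independently with probability $p$ on every knock on it (and staying open once open). Let $A_{\mathrm{simp}}=(1,2)^\infty$ be the alternating knock sequence $1,2,1,2,\dots$, executed without feedback. Then the expected number of knocks until both doors are open is $\mathbb{T}_{\mathcal{I}}(A_{\mathrm{simp}})=\frac{3}{p}-1$. *)

theory Defs
  imports "HOL-Probability.Probability"
begin

text \<open>Two doors, labelled 1 and 2. A knock sequence is a function A :: nat => nat,
  A k being the door knocked at the k-th knock (k = 0, 1, 2, ...), executed without feedback.
  Randomness: omega !! k says whether the k-th knock would open the door it is applied to;
  these are i.i.d. Doors stay open once opened, so door d is open after the
  first t knocks iff some knock k < t on door d succeeded.\<close>

definition door_open_after :: "(nat \<Rightarrow> nat) \<Rightarrow> bool stream \<Rightarrow> nat \<Rightarrow> nat \<Rightarrow> bool" where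
  "door_open_after A \<omega> d t \<longleftrightarrow> (\<exists>k<t. A k = d \<and> \<omega> !! k)"

definition both_open_after :: "(nat \<Rightarrow> nat) \<Rightarrow> bool stream \<Rightarrow> nat \<Rightarrow> bool" where
  "both_open_after A \<omega> t \<longleftrightarrow> door_open_after A \<omega> 1 t \<and> door_open_after A \<omega> 2 t"

definition knocks_until_open :: "(nat \<Rightarrow> nat) \<Rightarrow> bool stream \<Rightarrow> enat" where
  "knocks_until_open A \<omega> =
     (if \<exists>t. both_open_after A \<omega> t then enat (LEAST t. both_open_after A \<omega> t) else \<infinity>)"

definition knock_space :: "real \<Rightarrow> bool stream measure" where
  "knock_space p = stream_space (measure_pmf (bernoulli_pmf p))"

definition expected_knocks :: "real \<Rightarrow> (nat \<Rightarrow> nat) \<Rightarrow> ennreal" where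
  "expected_knocks p A = (\<integral>\<^sup>+ \<omega>. ennreal_of_enat (knocks_until_open A \<omega>) \<partial>knock_space p)"

definition A_simp :: "nat \<Rightarrow> nat" where
  "A_simp k = (if even k then 1 else 2)"

end

theory Submission
  imports Defs
begin

text \<open>The expected number of knocks is the tail sum \<open>\<Sum>t. P(T > t)\<close>. Door \<open>d\<close> is still
  closed after \<open>t\<close> knocks with probability \<open>q ^ n\<^sub>d\<close>, where \<open>q = 1 - p\<close> and \<open>n\<^sub>d\<close> counts the knocks
  on \<open>d\<close>; since every knock hits one of the two doors, inclusion-exclusion gives
  \<open>P(T > t) = q ^ \<lceil>t/2\<rceil> + q ^ \<lfloor>t/2\<rfloor> - q ^ t\<close> for the alternating sequence. Summing the
  geometric series yields \<open>(2/p - 1) + 2/p - 1/p = 3/p - 1\<close>.\<close>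

lemma nn_integral_no_success:
  fixes p :: real
  assumes "0 \<le> p" "p \<le> 1"
  shows "(\<integral>\<^sup>+ \<omega>. (if \<forall>k<t. S k \<longrightarrow> \<not> \<omega> !! k then 1 else 0) \<partial>knock_space p)
         = ennreal ((1 - p) ^ card {k. k < t \<and> S k})"
  using assms
proof (induction t arbitrary: S)
  case 0
  interpret P: prob_space "knock_space p"
    unfolding knock_space_def
    by (rule prob_space.prob_space_stream_space) (rule prob_space_measure_pmf)
  show ?case by (simp add: P.emeasure_space_1)
next
  case (Suc t)
  let ?c = "ennreal ((1 - p) ^ card {k. k < t \<and> S (Suc k)})"
  have pmf_space: "prob_space (measure_pmf (bernoulli_pmf p))" by (rule prob_space_measure_pmf)
  have head_tail: "(\<forall>k<Suc t. S k \<longrightarrow> \<not> (x ## xs) !! k) \<longleftrightarrow>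
        (S 0 \<longrightarrow> \<not> x) \<and> (\<forall>k<t. S (Suc k) \<longrightarrow> \<not> xs !! k)" for x xs
    by (auto simp: less_Suc_eq_0_disj)
  have card_Suc: "card {k. k < Suc t \<and> S k} = (if S 0 then 1 else 0) + card {k. k < t \<and> S (Suc k)}"
  proof -
    have "{k. k < Suc t \<and> S k} = (if S 0 then {0} else {}) \<union> Suc ` {k. k < t \<and> S (Suc k)}"
      by (auto simp: less_Suc_eq_0_disj image_iff)
    then show ?thesis by (simp add: card_image)
  qed
  have tail: "(\<lambda>xs. (if \<forall>k<t. S (Suc k) \<longrightarrow> \<not> xs !! k then 1 else 0) :: ennreal)
      \<in> borel_measurable (knock_space p)"
    unfolding knock_space_def by measurable
  have "(\<integral>\<^sup>+ \<omega>. (if \<forall>k<Suc t. S k \<longrightarrow> \<not> \<omega> !! k then 1 else 0) \<partial>knock_space p)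
     = (\<integral>\<^sup>+ x. (\<integral>\<^sup>+ xs. (if S 0 \<longrightarrow> \<not> x then 1 else 0) *
           (if \<forall>k<t. S (Suc k) \<longrightarrow> \<not> xs !! k then 1 else 0) \<partial>knock_space p) \<partial>bernoulli_pmf p)"
    unfolding knock_space_def
    by (subst prob_space.nn_integral_stream_space[OF pmf_space]) (auto simp: head_tail intro!: nn_integral_cong)
  also have "\<dots> = (\<integral>\<^sup>+ x. (if S 0 \<longrightarrow> \<not> x then 1 else 0) * ?c \<partial>bernoulli_pmf p)"
    by (simp add: nn_integral_cmult[OF tail] Suc.IH[OF Suc.prems])
  also have "\<dots> = (if S 0 then 0 else ?c) * ennreal p + ?c * ennreal (1 - p)"
    using Suc.prems by (subst nn_integral_bernoulli_pmf) auto
  also have "\<dots> = ennreal ((1 - p) ^ card {k. k < Suc t \<and> S k})"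
  proof (cases "S 0")
    case True
    then show ?thesis using Suc.prems by (simp add: card_Suc ennreal_mult'[symmetric] mult.commute)
  next
    case False
    have "ennreal p + ennreal (1 - p) = 1" using Suc.prems by (simp flip: ennreal_plus)
    then show ?thesis using False by (simp add: card_Suc flip: distrib_left)
  qed
  finally show ?case .
qed

lemma both_open_after_mono: "both_open_after A \<omega> t \<Longrightarrow> t \<le> s \<Longrightarrow> both_open_after A \<omega> s"
  unfolding both_open_after_def door_open_after_def by (meson order_less_le_trans)

lemma ennreal_of_enat_Least_eq_suminf:
  assumes mono: "\<And>t s. P t \<Longrightarrow> t \<le> s \<Longrightarrow> P s"
  shows "ennreal_of_enat (if \<exists>t. P t then enat (LEAST t. P t) else \<infinity>) = (\<Sum>t. if P t then 0 else 1)"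
proof (cases "\<exists>t. P t")
  case True
  define L where "L = (LEAST t. P t)"
  have "P L" using True unfolding L_def by (metis LeastI)
  then have P_iff: "P t \<longleftrightarrow> L \<le> t" for t
    using mono unfolding L_def by (blast intro: Least_le)
  have "(\<Sum>t. (if P t then 0 else 1) :: ennreal) = (\<Sum>t<L. if P t then 0 else 1)"
    by (rule suminf_finite) (auto simp: P_iff)
  also have "\<dots> = (\<Sum>t<L. 1)" by (intro sum.cong) (auto simp: P_iff)
  finally show ?thesis using True by (simp add: L_def)
next
  case False
  have "(\<Sum>t. ennreal 1) = \<top>"
  proof (rule ccontr)
    assume "(\<Sum>t. ennreal 1) \<noteq> \<top>"
    then have "summable (\<lambda>t. 1::real)" by (intro summable_suminf_not_top) auto
    then show False using summable_LIMSEQ_zero by (force simp: LIMSEQ_const_iff)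
  qed
  then show ?thesis using False by simp
qed

lemma expected_knocks_eq_suminf:
  "expected_knocks p A = (\<Sum>t. \<integral>\<^sup>+ \<omega>. (if both_open_after A \<omega> t then 0 else 1) \<partial>knock_space p)"
proof -
  have "expected_knocks p A =
      (\<integral>\<^sup>+ \<omega>. (\<Sum>t. (if both_open_after A \<omega> t then 0 else 1)) \<partial>knock_space p)"
    unfolding expected_knocks_def knocks_until_open_def
    by (intro nn_integral_cong ennreal_of_enat_Least_eq_suminf) (rule both_open_after_mono)
  also have "\<dots> = (\<Sum>t. \<integral>\<^sup>+ \<omega>. (if both_open_after A \<omega> t then 0 else 1) \<partial>knock_space p)"
    by (rule nn_integral_suminf)
      (unfold knock_space_def both_open_after_def door_open_after_def, measurable)
  finally show ?thesis .
qed

lemma nn_integral_not_both_open: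
  fixes p :: real and t :: nat
  assumes p: "0 \<le> p" "p \<le> 1" and doors: "\<And>k. A k = 1 \<or> A k = 2"
  defines "c d \<equiv> card {k. k < t \<and> A k = d}"
  shows "(\<integral>\<^sup>+ \<omega>. (if both_open_after A \<omega> t then 0 else 1) \<partial>knock_space p)
         = ennreal ((1 - p) ^ c 1 + (1 - p) ^ c 2 - (1 - p) ^ t)"
proof -
  let ?q = "1 - p"
  let ?closed = "\<lambda>S \<omega>. (if \<forall>k<t. S k \<longrightarrow> \<not> \<omega> !! k then 1 else 0) :: ennreal"
  let ?X = "\<integral>\<^sup>+ \<omega>. (if both_open_after A \<omega> t then 0 else 1) \<partial>knock_space p"
  have closed_meas: "?closed S \<in> borel_measurable (knock_space p)" for S
    unfolding knock_space_def by measurable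
  have not_both_meas: "(\<lambda>\<omega>. (if both_open_after A \<omega> t then 0 else 1) :: ennreal) \<in> borel_measurable (knock_space p)"
    unfolding knock_space_def both_open_after_def door_open_after_def by measurable
  \<comment> \<open>both doors are closed iff no knock at all succeeded, as every knock hits door 1 or 2\<close>
  have pointwise: "(if both_open_after A \<omega> t then 0 else 1) + ?closed (\<lambda>_. True) \<omega>
        = ?closed (\<lambda>k. A k = 1) \<omega> + ?closed (\<lambda>k. A k = 2) \<omega>" for \<omega>
    using doors unfolding both_open_after_def door_open_after_def by auto
  have "?X + ennreal (?q ^ t)
      = (\<integral>\<^sup>+ \<omega>. (if both_open_after A \<omega> t then 0 else 1) + ?closed (\<lambda>_. True) \<omega> \<partial>knock_space p)"
    using nn_integral_no_success[OF p, of t "\<lambda>_. True"]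
    by (subst nn_integral_add[OF not_both_meas closed_meas]) simp
  also have "\<dots> = ennreal (?q ^ c 1) + ennreal (?q ^ c 2)"
    using nn_integral_no_success[OF p] unfolding pointwise c_def
    by (simp add: nn_integral_add[OF closed_meas closed_meas])
  also have "\<dots> = ennreal (?q ^ c 1 + ?q ^ c 2 - ?q ^ t) + ennreal (?q ^ t)"
  proof -
    have "c 1 \<le> t" unfolding c_def by (rule order_trans[OF card_mono[of "{..<t}"]]) auto
    then have "?q ^ t \<le> ?q ^ c 1" using p by (intro power_decreasing) auto
    then show ?thesis using p by (subst ennreal_plus[symmetric]) (auto intro: add_increasing2)
  qed
  finally show ?thesis by simp
qed

lemma card_A_simp_door1: "card {k. k < t \<and> A_simp k = 1} = (t + 1) div 2"
proof -
  have "{k. k < t \<and> A_simp k = 1} = (\<lambda>j. 2 * j) ` {..<(t + 1) div 2}"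
    by (auto simp: A_simp_def image_iff elim!: evenE)
  then show ?thesis by (simp add: card_image inj_on_def)
qed

lemma card_A_simp_door2: "card {k. k < t \<and> A_simp k = 2} = t div 2"
proof -
  have "{k. k < t \<and> A_simp k = 2} = (\<lambda>j. 2 * j + 1) ` {..<t div 2}"
    by (auto simp: A_simp_def image_iff elim!: oddE)
  then show ?thesis by (simp add: card_image inj_on_def)
qed

lemma power_div_2_sums:
  fixes q :: real
  assumes "\<bar>q\<bar> < 1"
  shows "(\<lambda>t. q ^ (t div 2)) sums (2 / (1 - q))"
proof -
  have "(\<lambda>t. if even t then q ^ (t div 2) else q ^ ((t - 1) div 2)) sums (1 / (1 - q) + 1 / (1 - q))"
    using geometric_sums[of q] assms by (intro sums_if) simp_all
  moreover have "(if even t then q ^ (t div 2) else q ^ ((t - 1) div 2)) = q ^ (t div 2)" for t :: nat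
    by (auto elim!: oddE)
  ultimately show ?thesis by simp
qed

theorem mainTheorem17:
  fixes p :: real
  assumes "0 < p" and "p \<le> 1"
  shows "expected_knocks p A_simp = ennreal (3 / p - 1)"
proof -
  define q where "q = 1 - p"
  define r where "r t = q ^ (Suc t div 2) + q ^ (t div 2) - q ^ t" for t
  have q: "\<bar>q\<bar> < 1" "0 \<le> q" using assms by (auto simp: q_def)
  have A_simp_doors: "A_simp k = 1 \<or> A_simp k = 2" for k
    by (simp add: A_simp_def)
  have "expected_knocks p A_simp = (\<Sum>t. ennreal (r t))"
    unfolding expected_knocks_eq_suminf r_def q_def
    using nn_integral_not_both_open[of p A_simp, unfolded card_A_simp_door1 card_A_simp_door2]
      A_simp_doors assms by simp
  moreover have "r sums (3 / p - 1)"
  proof -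
    have "(\<lambda>t. q ^ (Suc t div 2)) sums (2 / p - 1)"
      unfolding sums_Suc_iff[of "\<lambda>t. q ^ (t div 2)"]
      using power_div_2_sums[OF q(1)] assms by (simp add: q_def)
    then have "r sums ((2 / p - 1) + 2 / p - 1 / p)"
      unfolding r_def using power_div_2_sums[OF q(1)] geometric_sums[of q] q(1) assms
      by (intro sums_add sums_diff) (simp_all add: q_def)
    then show ?thesis by (simp add: field_simps)
  qed
  moreover have "0 \<le> r t" for t
    using q power_decreasing[of "t div 2" t q] unfolding r_def by (simp add: add_increasing)
  ultimately show ?thesis
    by (simp add: suminf_ennreal2 sums_summable sums_unique[symmetric])
qed

end
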